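(* Let $\hat\Omega\subset\mathbb{R}^{N_D}$ be a reference element, let $P$ be a finite-dimensional space of real polynomials on $\hat\Omega$, and let $V$ be a finite-dimensional space of polynomial vector fields $\hat\Omega\to\mathbb{R}^{N_D}$ with $P^{N_D}\subseteq V$. Let $\{\hat x_\rho\}$ be solution points unisolvent for $P$ with Lagrange basis $\{l_\rho\}\subset P$, $l_\rho(\hat x_\sigma)=\delta_{\rho\sigma}$. Let $\{(\hat x_\nu,\hat n_\nu)\}$ be flux points with associated unit directions, split into external points $\nu\in E$ (on $\partial\hat\Omega$, with $\hat n_\nu$ the outward unit normal) and internal points $\nu\in I$, such that there is a basis $\{\boldsymbol\phi_\nu\}$ of $V$ with $\boldsymbol\phi_\rho(\hat x_\sigma)\cdot\hat n_\sigma=\delta_{\rho\sigma}$. Let $\{\mathbf g_\nu\}_{\nu\in E}$ be vector correction functions satisfying $\hat\nabla\cdot\mathbf g_\nu(\hat x_\sigma)=\hat\nabla\cdot\boldsymbol\phi_\nu(\hat x_\sigma)$ for every solution point $\hat x_\sigma$ and every $\nu\in E$. Let $u\in P$, let $\mathbf c\in\mathbb{R}^{N_D}$ be a constant vector, let $\mathbf f=\mathbf c\,u$ (a linear flux with constant coefficients), and let $\{F_\nu\}_{\nu\in E}$ be arbitrary real numbers (common normal fluxes). Define, at each solution point $\hat x_\sigma$, $$R^{\mathrm{SDRT}}_\sigma=\sum_{\nu\in I}\big(\mathbf f(\hat x_\nu)\cdot\hat n_\nu\big)\,\hat\nabla\cdot\boldsymbol\phi_\nu(\hat x_\sigma)+\sum_{\nu\in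 E}F_\nu\,\hat\nabla\cdot\boldsymbol\phi_\nu(\hat x_\sigma),$$ $$R^{\mathrm{FR}}_\sigma=\sum_\rho \mathbf f(\hat x_\rho)\cdot\hat\nabla l_\rho(\hat x_\sigma)+\sum_{\nu\in E}\Big(F_\nu-\Big[\sum_\rho \mathbf f(\hat x_\rho)\,l_\rho(\hat x_\nu)\Big]\cdot\hat n_\nu\Big)\hat\nabla\cdot\mathbf g_\nu(\hat x_\sigma).$$ Then $R^{\mathrm{SDRT}}_\sigma=R^{\mathrm{FR}}_\sigma$ for every solution point $\hat x_\sigma$. *)

theory Defs
  imports "HOL-Analysis.Analysis"
begin

inductive_set poly_fun :: "(real^'n \<Rightarrow> real) set" where
  pf_const: "(\<lambda>x. c) \<in> poly_fun"
| pf_coord: "(\<lambda>x. x $ i) \<in> poly_fun"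
| pf_add: "p \<in> poly_fun \<Longrightarrow> q \<in> poly_fun \<Longrightarrow> (\<lambda>x. p x + q x) \<in> poly_fun"
| pf_mult: "p \<in> poly_fun \<Longrightarrow> q \<in> poly_fun \<Longrightarrow> (\<lambda>x. p x * q x) \<in> poly_fun"

definition poly_vfield :: "(real^'n \<Rightarrow> real^'n) \<Rightarrow> bool" where
  "poly_vfield v \<longleftrightarrow> (\<forall>i. (\<lambda>x. v x $ i) \<in> poly_fun)"

definition pdiff :: "(real^'n \<Rightarrow> real) \<Rightarrow> 'n \<Rightarrow> real^'n \<Rightarrow> real" where
  "pdiff p i x = deriv (\<lambda>t. p (x + t *\<^sub>R axis i 1)) 0"

definition grad :: "(real^'n \<Rightarrow> real) \<Rightarrow> real^'n \<Rightarrow> real^'n" where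
  "grad p x = (\<chi> i. pdiff p i x)"

definition divg :: "(real^'n \<Rightarrow> real^'n) \<Rightarrow> real^'n \<Rightarrow> real" where
  "divg v x = (\<Sum>i\<in>UNIV. pdiff (\<lambda>y. v y $ i) i x)"

end

theory Submission imports Defs begin

text \<open>Both residuals compute the divergence of the flux at the solution point.
Since f = c u lies in P^N, which is contained in V, it expands in the basis dual to the
flux-point functionals with coefficients f(x_nu) . n_nu, so SD-RT computes div f once
F_nu is substituted for the external coefficients. Since u is reproduced by its
Lagrange interpolant, FR computes div f as well, and its correction term equals the same
substitution because the interpolant of f at x_nu is f(x_nu) and div g_nu = div phi_nu at
the solution points.\<close>

lemma poly_fun_field_differentiable_along_line:
  "p \<in> poly_fun \<Longrightarrow> (\<lambda>t. p (x + t *\<^sub>R d)) field_differentiable at (t0::real)"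
proof (induction p rule: poly_fun.induct)
  case (pf_const c) then show ?case by simp
next
  case (pf_coord i)
  have "((\<lambda>t. x $ i + t * d $ i) has_field_derivative d $ i) (at t0)"
    by (auto intro!: derivative_eq_intros)
  then show ?case by (auto simp: field_differentiable_def)
next
  case (pf_add p q) then show ?case by (intro field_differentiable_add)
next
  case (pf_mult p q) then show ?case by (intro field_differentiable_mult)
qed

lemma pdiff_sum:
  assumes "finite K" "\<And>k. k \<in> K \<Longrightarrow> p k \<in> poly_fun"
  shows "pdiff (\<lambda>y. \<Sum>k\<in>K. a k * p k y) i x = (\<Sum>k\<in>K. a k * pdiff (p k) i x)"
proof -
  have "((\<lambda>t. \<Sum>k\<in>K. a k * p k (x + t *\<^sub>R axis i 1)) has_field_derivative
     (\<Sum>k\<in>K. a k * deriv (\<lambda>t. p k (x + t *\<^sub>R axis i 1)) 0)) (at 0)"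
    using assms(2) by (intro DERIV_sum DERIV_cmult)
      (simp add: DERIV_deriv_iff_field_differentiable poly_fun_field_differentiable_along_line)
  then show ?thesis unfolding pdiff_def by (rule DERIV_imp_deriv)
qed

lemma pdiff_cmult:
  assumes "p \<in> poly_fun"
  shows "pdiff (\<lambda>y. a * p y) i x = a * pdiff p i x"
  using pdiff_sum[of "{()}" "\<lambda>_. p" "\<lambda>_. a"] assms by simp

lemma grad_sum:
  assumes "finite K" "\<And>k. k \<in> K \<Longrightarrow> p k \<in> poly_fun"
  shows "grad (\<lambda>y. \<Sum>k\<in>K. a k * p k y) x = (\<Sum>k\<in>K. a k *\<^sub>R grad (p k) x)"
  using pdiff_sum[OF assms] by (simp add: grad_def vec_eq_iff sum_component)

lemma divg_sum:
  assumes "finite K" "\<And>k. k \<in> K \<Longrightarrow> poly_vfield (v k)"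
  shows "divg (\<lambda>y. \<Sum>k\<in>K. a k *\<^sub>R v k y) x = (\<Sum>k\<in>K. a k * divg (v k) x)"
proof -
  have "divg (\<lambda>y. \<Sum>k\<in>K. a k *\<^sub>R v k y) x
      = (\<Sum>i\<in>UNIV. \<Sum>k\<in>K. a k * pdiff (\<lambda>y. v k y $ i) i x)"
    unfolding divg_def using assms
    by (simp add: sum_component pdiff_sum poly_vfield_def)
  also have "\<dots> = (\<Sum>k\<in>K. a k * divg (v k) x)"
    unfolding divg_def by (subst sum.swap) (simp add: sum_distrib_left)
  finally show ?thesis .
qed

lemma divg_scaleR_const:
  assumes "p \<in> poly_fun"
  shows "divg (\<lambda>y. p y *\<^sub>R c) x = c \<bullet> grad p x"
  using pdiff_cmult[OF assms]
  by (simp add: divg_def grad_def inner_vec_def mult.commute[of "p _"])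

lemma divg_scaleR_interpolant:
  assumes "finite S" "\<And>\<rho>. \<rho> \<in> S \<Longrightarrow> l \<rho> \<in> poly_fun" "u \<in> poly_fun"
    and u: "u = (\<lambda>x. \<Sum>\<rho>\<in>S. u (xs \<rho>) * l \<rho> x)"
  shows "divg (\<lambda>x. u x *\<^sub>R c) y = (\<Sum>\<rho>\<in>S. (u (xs \<rho>) *\<^sub>R c) \<bullet> grad (l \<rho>) y)"
proof -
  have "divg (\<lambda>x. u x *\<^sub>R c) y = c \<bullet> grad u y"
    using assms(3) by (rule divg_scaleR_const)
  also have "grad u y = (\<Sum>\<rho>\<in>S. u (xs \<rho>) *\<^sub>R grad (l \<rho>) y)"
    using grad_sum[OF assms(1,2), where a="\<lambda>\<rho>. u (xs \<rho>)" and x=y] by (subst u) simp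
  finally show ?thesis by (simp add: inner_sum_right)
qed

lemma sum_mult_closed:
  fixes P :: "('a \<Rightarrow> real) set"
  assumes P_zero: "(\<lambda>x. 0) \<in> P"
    and P_add: "\<And>p q. p \<in> P \<Longrightarrow> q \<in> P \<Longrightarrow> (\<lambda>x. p x + q x) \<in> P"
    and P_scale: "\<And>p a. p \<in> P \<Longrightarrow> (\<lambda>x. a * p x) \<in> P"
    and "finite K" "\<And>k. k \<in> K \<Longrightarrow> q k \<in> P"
  shows "(\<lambda>x. \<Sum>k\<in>K. b k * q k x) \<in> P"
  using assms(4,5)
proof (induction K rule: finite_induct)
  case empty then show ?case using P_zero by simp
next
  case (insert k K)
  then have "(\<lambda>x. b k * q k x + (\<Sum>k\<in>K. b k * q k x)) \<in> P"
    by (intro P_add P_scale) auto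
  then show ?case using insert by simp
qed

lemma lagrange_interpolation:
  fixes P :: "('a \<Rightarrow> real) set" and xs :: "'s \<Rightarrow> 'a"
  assumes P_zero: "(\<lambda>x. 0) \<in> P"
    and P_add: "\<And>p q. p \<in> P \<Longrightarrow> q \<in> P \<Longrightarrow> (\<lambda>x. p x + q x) \<in> P"
    and P_scale: "\<And>p a. p \<in> P \<Longrightarrow> (\<lambda>x. a * p x) \<in> P"
    and "finite S"
    and unisolvent: "\<And>p. p \<in> P \<Longrightarrow> (\<forall>\<rho>\<in>S. p (xs \<rho>) = 0) \<Longrightarrow> p = (\<lambda>x. 0)"
    and l_in_P: "\<And>\<rho>. \<rho> \<in> S \<Longrightarrow> l \<rho> \<in> P"
    and l_delta: "\<And>\<rho> \<sigma>. \<rho> \<in> S \<Longrightarrow> \<sigma> \<in> S \<Longrightarrow> l \<rho> (xs \<sigma>) = (if \<rho> = \<sigma> then 1 else 0)"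
    and "u \<in> P"
  shows "u = (\<lambda>x. \<Sum>\<rho>\<in>S. u (xs \<rho>) * l \<rho> x)"
proof -
  define w where "w = (\<lambda>x. \<Sum>\<rho>\<in>S. u (xs \<rho>) * l \<rho> x)"
  have "w \<in> P"
    unfolding w_def by (rule sum_mult_closed[OF P_zero P_add P_scale \<open>finite S\<close> l_in_P])
  then have "(\<lambda>x. u x + (-1) * w x) \<in> P"
    using \<open>u \<in> P\<close> by (intro P_add P_scale)
  moreover have "w (xs \<rho>) = u (xs \<rho>)" if "\<rho> \<in> S" for \<rho>
  proof -
    have "w (xs \<rho>) = (\<Sum>\<rho>'\<in>S. if \<rho>' = \<rho> then u (xs \<rho>') else 0)"
      unfolding w_def using that l_delta by (intro sum.cong) auto
    then show ?thesis using that \<open>finite S\<close> by simp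
  qed
  ultimately have "(\<lambda>x. u x + (-1) * w x) = (\<lambda>x. 0)"
    by (intro unisolvent) auto
  then have "u x = w x" for x by (simp add: fun_eq_iff)
  then show ?thesis unfolding w_def by (intro ext)
qed

lemma dual_basis_coeff:
  fixes \<phi> :: "'f \<Rightarrow> 'a \<Rightarrow> 'b::real_inner"
  assumes "finite K" "\<tau> \<in> K"
    and "\<And>\<rho>. \<rho> \<in> K \<Longrightarrow> \<phi> \<rho> (xf \<tau>) \<bullet> nf \<tau> = (if \<rho> = \<tau> then 1 else 0)"
  shows "(\<Sum>\<nu>\<in>K. a \<nu> *\<^sub>R \<phi> \<nu> (xf \<tau>)) \<bullet> nf \<tau> = a \<tau>"
proof -
  have "(\<Sum>\<nu>\<in>K. a \<nu> *\<^sub>R \<phi> \<nu> (xf \<tau>)) \<bullet> nf \<tau> = (\<Sum>\<nu>\<in>K. a \<nu> * (\<phi> \<nu> (xf \<tau>) \<bullet> nf \<tau>))"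
    by (simp add: inner_sum_left)
  also have "\<dots> = (\<Sum>\<nu>\<in>K. if \<nu> = \<tau> then a \<nu> else 0)"
    using assms(3) by (intro sum.cong) auto
  finally show ?thesis using assms(1,2) by simp
qed

lemma divg_dual_basis_expansion:
  assumes "finite K" "\<And>\<nu>. \<nu> \<in> K \<Longrightarrow> poly_vfield (\<phi> \<nu>)"
    and "\<And>\<rho> \<tau>. \<rho> \<in> K \<Longrightarrow> \<tau> \<in> K \<Longrightarrow> \<phi> \<rho> (xf \<tau>) \<bullet> nf \<tau> = (if \<rho> = \<tau> then 1 else 0)"
    and v: "v = (\<lambda>x. \<Sum>\<nu>\<in>K. a \<nu> *\<^sub>R \<phi> \<nu> x)"
  shows "divg v y = (\<Sum>\<nu>\<in>K. (v (xf \<nu>) \<bullet> nf \<nu>) * divg (\<phi> \<nu>) y)"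
proof -
  have "divg v y = (\<Sum>\<nu>\<in>K. a \<nu> * divg (\<phi> \<nu>) y)"
    unfolding v using assms(1,2) by (rule divg_sum)
  also have "\<dots> = (\<Sum>\<nu>\<in>K. (v (xf \<nu>) \<bullet> nf \<nu>) * divg (\<phi> \<nu>) y)"
  proof (intro sum.cong refl)
    fix \<nu> assume "\<nu> \<in> K"
    then show "a \<nu> * divg (\<phi> \<nu>) y = (v (xf \<nu>) \<bullet> nf \<nu>) * divg (\<phi> \<nu>) y"
      using dual_basis_coeff[where \<phi>=\<phi> and a=a and xf=xf and nf=nf,
          OF assms(1) \<open>\<nu> \<in> K\<close> assms(3)[OF _ \<open>\<nu> \<in> K\<close>]] v
      by simp
  qed
  finally show ?thesis .
qed

theorem mainTheorem1:
  fixes \<Omega> :: "(real^'n) set"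
    and P :: "(real^'n \<Rightarrow> real) set"
    and V :: "(real^'n \<Rightarrow> real^'n) set"
    and S :: "'s set" and xs :: "'s \<Rightarrow> real^'n" and l :: "'s \<Rightarrow> real^'n \<Rightarrow> real"
    and I E :: "'f set" and xf :: "'f \<Rightarrow> real^'n" and nf :: "'f \<Rightarrow> real^'n"
    and \<phi> :: "'f \<Rightarrow> real^'n \<Rightarrow> real^'n" and g :: "'f \<Rightarrow> real^'n \<Rightarrow> real^'n"
    and u :: "real^'n \<Rightarrow> real" and c :: "real^'n" and F :: "'f \<Rightarrow> real"
    and \<sigma> :: 's
  assumes ref_elem: "convex \<Omega>" "compact \<Omega>" "interior \<Omega> \<noteq> {}"
    \<comment> \<open>P: a (finite-dimensional) linear space of real polynomials\<close>
    and P_poly: "P \<subseteq> poly_fun"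
    and P_zero: "(\<lambda>x. 0) \<in> P"
    and P_add: "\<And>p q. p \<in> P \<Longrightarrow> q \<in> P \<Longrightarrow> (\<lambda>x. p x + q x) \<in> P"
    and P_scale: "\<And>p a. p \<in> P \<Longrightarrow> (\<lambda>x. a * p x) \<in> P"
    \<comment> \<open>V: a linear space of polynomial vector fields containing P^N\<close>
    and V_poly: "\<And>v. v \<in> V \<Longrightarrow> poly_vfield v"
    and V_zero: "(\<lambda>x. 0) \<in> V"
    and V_add: "\<And>v w. v \<in> V \<Longrightarrow> w \<in> V \<Longrightarrow> (\<lambda>x. v x + w x) \<in> V"
    and V_scale: "\<And>v a. v \<in> V \<Longrightarrow> (\<lambda>x. a *\<^sub>R v x) \<in> V"
    and PN_sub_V: "\<And>v. (\<forall>i. (\<lambda>x. v x $ i) \<in> P) \<Longrightarrow> v \<in> V"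
    \<comment> \<open>solution points, unisolvent for P, with Lagrange basis\<close>
    and S_fin: "finite S"
    and xs_in: "\<And>\<rho>. \<rho> \<in> S \<Longrightarrow> xs \<rho> \<in> \<Omega>"
    and unisolvent: "\<And>p. p \<in> P \<Longrightarrow> (\<forall>\<rho>\<in>S. p (xs \<rho>) = 0) \<Longrightarrow> p = (\<lambda>x. 0)"
    and l_in_P: "\<And>\<rho>. \<rho> \<in> S \<Longrightarrow> l \<rho> \<in> P"
    and l_delta: "\<And>\<rho> \<sigma>'. \<rho> \<in> S \<Longrightarrow> \<sigma>' \<in> S \<Longrightarrow> l \<rho> (xs \<sigma>') = (if \<rho> = \<sigma>' then 1 else 0)"
    \<comment> \<open>flux points: external (on the boundary, outward unit normal) and internal\<close>
    and IE_fin: "finite I" "finite E"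
    and IE_disj: "I \<inter> E = {}"
    and nf_unit: "\<And>\<nu>. \<nu> \<in> I \<union> E \<Longrightarrow> norm (nf \<nu>) = 1"
    and xf_int: "\<And>\<nu>. \<nu> \<in> I \<Longrightarrow> xf \<nu> \<in> \<Omega>"
    and xf_ext: "\<And>\<nu>. \<nu> \<in> E \<Longrightarrow> xf \<nu> \<in> frontier \<Omega>"
    and nf_outward: "\<And>\<nu> y. \<nu> \<in> E \<Longrightarrow> y \<in> \<Omega> \<Longrightarrow> (y - xf \<nu>) \<bullet> nf \<nu> \<le> 0"
    \<comment> \<open>{phi_nu} is a basis of V, dual to the flux-point functionals\<close>
    and phi_in_V: "\<And>\<nu>. \<nu> \<in> I \<union> E \<Longrightarrow> \<phi> \<nu> \<in> V"
    and phi_indep: "\<And>a. (\<lambda>x. \<Sum>\<nu>\<in>I \<union> E. a \<nu> *\<^sub>R \<phi> \<nu> x) = (\<lambda>x. 0) \<Longrightarrow> \<forall>\<nu>\<in>I \<union> E. a \<nu> = 0"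
    and phi_span: "\<And>v. v \<in> V \<Longrightarrow> \<exists>a. v = (\<lambda>x. \<Sum>\<nu>\<in>I \<union> E. a \<nu> *\<^sub>R \<phi> \<nu> x)"
    and phi_delta: "\<And>\<rho> \<tau>. \<rho> \<in> I \<union> E \<Longrightarrow> \<tau> \<in> I \<union> E \<Longrightarrow>
        \<phi> \<rho> (xf \<tau>) \<bullet> nf \<tau> = (if \<rho> = \<tau> then 1 else 0)"
    \<comment> \<open>correction functions\<close>
    and g_div: "\<And>\<nu> \<sigma>'. \<nu> \<in> E \<Longrightarrow> \<sigma>' \<in> S \<Longrightarrow> divg (g \<nu>) (xs \<sigma>') = divg (\<phi> \<nu>) (xs \<sigma>')"
    \<comment> \<open>the solution and the point\<close>
    and u_in_P: "u \<in> P"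
    and \<sigma>_in: "\<sigma> \<in> S"
  shows "(let f = (\<lambda>x. u x *\<^sub>R c) in
     (\<Sum>\<nu>\<in>I. (f (xf \<nu>) \<bullet> nf \<nu>) * divg (\<phi> \<nu>) (xs \<sigma>))
       + (\<Sum>\<nu>\<in>E. F \<nu> * divg (\<phi> \<nu>) (xs \<sigma>))
     = (\<Sum>\<rho>\<in>S. f (xs \<rho>) \<bullet> grad (l \<rho>) (xs \<sigma>))
       + (\<Sum>\<nu>\<in>E. (F \<nu> - (\<Sum>\<rho>\<in>S. l \<rho> (xf \<nu>) *\<^sub>R f (xs \<rho>)) \<bullet> nf \<nu>)
                    * divg (g \<nu>) (xs \<sigma>)))"
proof -
  define f where "f = (\<lambda>x. u x *\<^sub>R c)"
  define D where "D = (\<lambda>\<nu>. divg (\<phi> \<nu>) (xs \<sigma>))"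
  have u_interp: "u = (\<lambda>x. \<Sum>\<rho>\<in>S. u (xs \<rho>) * l \<rho> x)"
    using P_zero P_add P_scale S_fin unisolvent l_in_P l_delta u_in_P
    by (rule lagrange_interpolation)
  have f_interp: "(\<Sum>\<rho>\<in>S. l \<rho> y *\<^sub>R f (xs \<rho>)) = f y" for y
    using fun_cong[OF u_interp, of y] unfolding f_def
    by (simp add: scaleR_sum_left[symmetric] mult.commute)
  have "f \<in> V"
    unfolding f_def using P_scale[OF u_in_P] by (intro PN_sub_V) (simp add: mult.commute[of "u _"])
  then obtain a where "f = (\<lambda>x. \<Sum>\<nu>\<in>I \<union> E. a \<nu> *\<^sub>R \<phi> \<nu> x)" using phi_span by blast
  then have "divg f (xs \<sigma>) = (\<Sum>\<nu>\<in>I \<union> E. (f (xf \<nu>) \<bullet> nf \<nu>) * D \<nu>)"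
    unfolding D_def using IE_fin V_poly phi_in_V phi_delta
    by (intro divg_dual_basis_expansion) auto
  then have div_SDRT: "divg f (xs \<sigma>)
      = (\<Sum>\<nu>\<in>I. (f (xf \<nu>) \<bullet> nf \<nu>) * D \<nu>) + (\<Sum>\<nu>\<in>E. (f (xf \<nu>) \<bullet> nf \<nu>) * D \<nu>)"
    using IE_fin IE_disj by (simp add: sum.union_disjoint)
  have div_FR: "divg f (xs \<sigma>) = (\<Sum>\<rho>\<in>S. f (xs \<rho>) \<bullet> grad (l \<rho>) (xs \<sigma>))"
    unfolding f_def using S_fin l_in_P P_poly u_in_P u_interp by (intro divg_scaleR_interpolant) auto
  have "(\<Sum>\<nu>\<in>E. (F \<nu> - (\<Sum>\<rho>\<in>S. l \<rho> (xf \<nu>) *\<^sub>R f (xs \<rho>)) \<bullet> nf \<nu>) * divg (g \<nu>) (xs \<sigma>))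
      = (\<Sum>\<nu>\<in>E. F \<nu> * D \<nu>) - (\<Sum>\<nu>\<in>E. (f (xf \<nu>) \<bullet> nf \<nu>) * D \<nu>)"
    unfolding f_interp D_def using g_div \<sigma>_in
    by (simp add: sum_subtractf[symmetric] left_diff_distrib)
  then show ?thesis using div_SDRT div_FR unfolding Let_def f_def[symmetric] D_def by linarith
qed

end
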